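(* For all $a,b\in\mathbb R$, \[\frac{1}{1+|a|}\le\frac{e^{a-b}-1}{a-b}\cdot\frac{1+e^b}{1+e^a},\] where for $a=b$ the factor $\frac{e^{a-b}-1}{a-b}$ is interpreted as $1$. *)

theory Defs
  imports Complex_Main
begin

end

theory Submission
  imports Defs
begin

text \<open>
  With \<open>\<sigma> x = e\<^sup>x / (1 + e\<^sup>x)\<close> the logistic function, the right-hand side equals
  \<open>(\<sigma> a - \<sigma> b) / (a - b)\<close> divided by \<open>\<sigma>' b\<close>. This ratio is invariant under
  \<open>(a, b) \<mapsto> (-a, -b)\<close>, so we may assume \<open>a \<ge> 0\<close>. For \<open>b \<ge> a\<close> the ratio is even at
  least 1. For \<open>b < a\<close> we clear denominators and conclude from the two elementary bounds
  \<open>1 + x \<le> e\<^sup>x\<close> and \<open>2x \<le> e\<^sup>x - e\<^sup>-\<^sup>x\<close> (for \<open>x \<ge> 0\<close>), treating \<open>b \<ge> 0\<close> and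
  \<open>b < 0\<close> separately.
\<close>

lemma one_plus_exp_pos [simp]: "0 < 1 + exp (x :: real)"
  by (simp add: add_pos_pos)

lemmas one_plus_exp_neq_zero [simp] = one_plus_exp_pos[THEN less_imp_neq, THEN not_sym]

lemma two_mult_le_exp_minus_exp_uminus:
  fixes x :: real
  assumes "0 \<le> x"
  shows "2 * x \<le> exp x - exp (- x)"
  using real_le_x_sinh[OF assms] by (simp add: exp_minus)

lemma le_one_plus_mult_one_minus_exp_uminus:
  fixes x :: real
  assumes "0 \<le> x"
  shows "x \<le> (1 + x) * (1 - exp (- x))"
proof -
  have "(1 + x) * exp (- x) \<le> exp x * exp (- x)"
    using exp_ge_add_one_self[of x] by (intro mult_right_mono) auto
  then show ?thesis
    by (simp add: exp_minus_inverse algebra_simps)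
qed

lemma exp_secant_bound_right:
  fixes a b :: real
  assumes "0 \<le> a" "a < b"
  shows "(b - a) * (1 + exp a) \<le> (1 - exp (a - b)) * (1 + exp b)"
proof -
  define t where "t = b - a"
  have t: "0 < t" "b = a + t"
    using assms by (auto simp: t_def)
  have "(1 - exp (a - b)) * (1 + exp b) = (exp t - exp (- t)) + (exp a - 1) * (exp t - 1)"
    by (simp add: t exp_add exp_minus field_simps)
  moreover have "2 * t \<le> exp t - exp (- t)"
    using t by (intro two_mult_le_exp_minus_exp_uminus) auto
  moreover have "(exp a - 1) * t \<le> (exp a - 1) * (exp t - 1)"
    using assms exp_ge_add_one_self[of t] by (intro mult_left_mono) (linarith, simp)
  ultimately show ?thesis
    by (simp add: t_def algebra_simps)
qed

lemma exp_secant_bound_left_nonneg: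
  fixes a b :: real
  assumes "0 \<le> b" "b < a"
  shows "(a - b) * (1 + exp a) \<le> (1 + a) * ((exp (a - b) - 1) * (1 + exp b))"
proof -
  define d where "d = a - b"
  have d: "0 < d" "d \<le> a"
    using assms by (auto simp: d_def)
  have "(a - b) * (1 + exp a) = d + exp a * d"
    by (simp add: d_def algebra_simps)
  also have "\<dots> \<le> (1 + a) * (exp d - 1) + exp a * ((1 + a) * (1 - exp (- d)))"
  proof (intro add_mono mult_left_mono)
    have "d \<le> exp d - 1"
      using exp_ge_add_one_self[of d] by linarith
    moreover have "0 \<le> a * (exp d - 1)"
      using d by simp
    ultimately show "d \<le> (1 + a) * (exp d - 1)"
      by (simp add: distrib_right)
    have "d \<le> (1 + d) * (1 - exp (- d))"
      using d by (intro le_one_plus_mult_one_minus_exp_uminus) auto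
    also have "\<dots> \<le> (1 + a) * (1 - exp (- d))"
      using d by (intro mult_right_mono) auto
    finally show "d \<le> (1 + a) * (1 - exp (- d))" .
  qed simp
  also have "\<dots> = (1 + a) * ((exp (a - b) - 1) * (1 + exp b))"
    by (simp add: d_def exp_diff exp_minus field_simps)
  finally show ?thesis .
qed

lemma exp_secant_bound_left_neg:
  fixes a b :: real
  assumes "b < 0" "0 \<le> a"
  shows "(a - b) * (1 + exp a) \<le> (1 + a) * ((exp (a - b) - 1) * (1 + exp b))"
proof -
  define c where "c = - b"
  have c: "0 < c" "b = - c"
    using assms by (auto simp: c_def)
  have "(a - b) * (1 + exp a) \<le> (1 + a) * ((2 + c) * (exp a - 1) + 2 * c)"
  proof -
    have "(2 + a + a * c) * a \<le> (2 + a + a * c) * (exp a - 1)"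
      using assms c exp_ge_add_one_self[of a] by (intro mult_left_mono) (linarith, simp)
    moreover have "0 \<le> a * a + a * a * c + 2 * a * c"
      using assms c by simp
    ultimately show ?thesis
      by (simp add: c algebra_simps)
  qed
  also have "\<dots> \<le> (1 + a) * ((1 + exp c) * (exp a - 1) + (exp c - exp (- c)))"
  proof (intro mult_left_mono add_mono)
    show "(2 + c) * (exp a - 1) \<le> (1 + exp c) * (exp a - 1)"
      using assms exp_ge_add_one_self[of c] by (intro mult_right_mono) auto
    show "2 * c \<le> exp c - exp (- c)"
      using c by (intro two_mult_le_exp_minus_exp_uminus) auto
  qed (use assms in simp)
  also have "\<dots> = (1 + a) * ((exp (a - b) - 1) * (1 + exp b))"
    by (simp add: c exp_add exp_minus field_simps)
  finally show ?thesis .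
qed

definition logistic_slope_ratio :: "real \<Rightarrow> real \<Rightarrow> real" where
  "logistic_slope_ratio a b =
    (if a = b then 1 else (exp (a - b) - 1) / (a - b)) * ((1 + exp b) / (1 + exp a))"

lemma diff_divide_diff_swap:
  fixes x y u v :: "'a :: field"
  shows "(x - y) / (u - v) = (y - x) / (v - u)"
  by (metis minus_diff_eq minus_divide_divide)

lemma logistic_slope_ratio_uminus:
  "logistic_slope_ratio (- a) (- b) = logistic_slope_ratio a b"
proof (cases "a = b")
  case False
  have "(1 + exp (- b)) / (1 + exp (- a)) = exp (a - b) * ((1 + exp b) / (1 + exp a))"
    by (simp add: exp_minus exp_diff field_simps)
  moreover have "(exp (b - a) - 1) * exp (a - b) = 1 - exp (a - b)"
    by (simp add: algebra_simps flip: exp_add)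
  ultimately have "logistic_slope_ratio (- a) (- b) =
      (1 - exp (a - b)) / (b - a) * ((1 + exp b) / (1 + exp a))"
    using False by (simp add: logistic_slope_ratio_def)
  then show ?thesis
    using False by (simp add: logistic_slope_ratio_def diff_divide_diff_swap[of 1 "exp (a - b)" b a])
qed (simp add: logistic_slope_ratio_def)

lemma one_le_logistic_slope_ratio:
  assumes "0 \<le> a" "a \<le> b"
  shows "1 \<le> logistic_slope_ratio a b"
proof (cases "a = b")
  case False
  then have "a < b"
    using assms by simp
  then have "1 \<le> (1 - exp (a - b)) / (b - a) * ((1 + exp b) / (1 + exp a))"
    using exp_secant_bound_right[OF assms(1)] by (simp add: divide_simps)
  then show ?thesis
    using False by (simp add: logistic_slope_ratio_def diff_divide_diff_swap[of 1 "exp (a - b)" b a])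
qed (simp add: logistic_slope_ratio_def)

lemma logistic_slope_ratio_lower_bound:
  assumes "0 \<le> a" "b < a"
  shows "1 / (1 + a) \<le> logistic_slope_ratio a b"
proof -
  have "(a - b) * (1 + exp a) \<le> (1 + a) * ((exp (a - b) - 1) * (1 + exp b))"
    using assms exp_secant_bound_left_nonneg exp_secant_bound_left_neg by (cases "0 \<le> b") auto
  then show ?thesis
    using assms
    by (simp add: logistic_slope_ratio_def divide_simps mult.commute mult.left_commute)
qed

lemma inverse_one_plus_le_logistic_slope_ratio:
  assumes "0 \<le> a"
  shows "1 / (1 + a) \<le> logistic_slope_ratio a b"
proof (cases "a \<le> b")
  case True
  have "1 / (1 + a) \<le> 1"
    using assms by simp
  also have "\<dots> \<le> logistic_slope_ratio a b"
    using assms True by (rule one_le_logistic_slope_ratio)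
  finally show ?thesis .
qed (use assms logistic_slope_ratio_lower_bound in simp)

theorem lemma4:
  fixes a b :: real
  shows "1 / (1 + \<bar>a\<bar>) \<le>
    (if a = b then 1 else (exp (a - b) - 1) / (a - b)) * ((1 + exp b) / (1 + exp a))"
proof -
  have "1 / (1 + \<bar>a\<bar>) \<le> logistic_slope_ratio a b"
  proof (cases "0 \<le> a")
    case False
    then show ?thesis
      using inverse_one_plus_le_logistic_slope_ratio[of "- a" "- b"]
      by (simp add: logistic_slope_ratio_uminus)
  qed (simp add: inverse_one_plus_le_logistic_slope_ratio)
  then show ?thesis
    by (simp add: logistic_slope_ratio_def)
qed

end
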